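(* For any valid scheme (satisfying (C1)–(C8)) with $N\ge1$, $K\ge2$, the normalized download cost satisfies \[ d\ \ge\ 1+\frac1N+\frac1{N^2}+\dots+\frac1{N^{K-1}}. \]
   Context: Model (SPIR with user-side common randomness). There are $N\ge1$ non-colluding databases, each storing the same $K\ge2$ messages $W_1,\dots,W_K$. Each message consists of $L$ i.i.d. symbols uniform over a sufficiently large finite field $\mathbb{F}_q$; entropies are in $q$-ary units, so $H(W_k)=L$ and $H(W_{1:K})=KL$. The databases share server-side common randomness $\mathcal{R}_S$, unknown to the user. The user holds user-side common randomness $\mathcal{R}_U$, a subset of the components of $\mathcal{R}_S$, unknown to the databases except for its size (uniform over subsets of given cardinality). $\mathcal{F}$ is the user's retrieval-strategy randomness. To retrieve $W_k$ the user sends $Q_n^{[k,\mathcal{R}_U]}$ to database $n$, receiving $A_n^{[k,\mathcal{R}_U]}$; $W_{\bar k}=\{W_j:j\ne k\}$. A valid scheme satisfies for all $k,n,\mathcal{R}_U$: (C1) $I(W_{1:K};k,\mathcal{F},\mathcal{R}_S,\mathcal{R}_U)=0$; (C2) $I(Q_{1:N}^{[k,\mathcal{R}_U]};W_{1:K},\mathcal{R}_S\setminus\mathcal{R}_U)=0$; (C3) $H(Q_{1:N}^{[k,\mathcal{R}_U]}\mid\mathcal{F})=0$; (C4) $H(A_n^{[k,\mathcal{R}_U]}\mid Q_n^{[k,\mathcal{R}_U]},W_{1:K},\mathcal{R}_S)=0$; (C5) $H(W_k\mid\mathcal{F},A_{1:N}^{[k,\mathcal{R}_U]},\mathcal{R}_U)=0$;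 (C6) user privacy: for all $k,k',n,\mathcal{R}_U$ there is $\mathcal{R}_U'$ with $H(\mathcal{R}_U')=H(\mathcal{R}_U)$ and $(Q_n^{[k,\mathcal{R}_U]},A_n^{[k,\mathcal{R}_U]},W_{1:K},\mathcal{R}_S)\sim(Q_n^{[k',\mathcal{R}_U']},A_n^{[k',\mathcal{R}_U']},W_{1:K},\mathcal{R}_S)$; (C7) $I(W_{\bar k};\mathcal{F},A_{1:N}^{[k,\mathcal{R}_U]},\mathcal{R}_U)=0$; (C8) $I(\mathcal{R}_S\setminus\mathcal{R}_U;\mathcal{F},A_{1:N}^{[k,\mathcal{R}_U]},W_k,\mathcal{R}_U)=0$. $D$ is the maximal total number of downloaded symbols; $d=D/L$. *)

theory Defs
  imports "HOL-Probability.Probability_Mass_Function"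
begin

definition ent :: "real \<Rightarrow> 'w pmf \<Rightarrow> ('w \<Rightarrow> 'a) \<Rightarrow> real" where
  "ent b P X = - (\<Sum>x\<in>set_pmf (map_pmf X P).
                     pmf (map_pmf X P) x * log b (pmf (map_pmf X P) x))"

definition cond_ent :: "real \<Rightarrow> 'w pmf \<Rightarrow> ('w \<Rightarrow> 'a) \<Rightarrow> ('w \<Rightarrow> 'b) \<Rightarrow> real" where
  "cond_ent b P X Y = ent b P (\<lambda>w. (X w, Y w)) - ent b P Y"

definition mut_inf :: "real \<Rightarrow> 'w pmf \<Rightarrow> ('w \<Rightarrow> 'a) \<Rightarrow> ('w \<Rightarrow> 'b) \<Rightarrow> real" where
  "mut_inf b P X Y = ent b P X + ent b P Y - ent b P (\<lambda>w. (X w, Y w))"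

end

theory Submission
  imports Defs "HOL-Probability.Information"
begin

text \<open>Let f(k) and g(k) be the largest (over the user's randomness) entropy of the N answers
  for message k given the user's strategy F, the databases' randomness and the messages
  W(1), ..., W(k-1), resp. W(1), ..., W(k). Since W(k) is decodable from the answers and is
  independent of everything conditioned on, f(k) \<ge> L + g(k). By user privacy database n answers
  a query for message k+1 like one for message k, and an answer depends on F only through its
  query, so f(k+1) \<le> N g(k). As f(1) \<le> D and g(K) \<ge> 0, unwinding gives
  D \<ge> L (1 + 1/N + ... + 1/N^(K-1)).\<close>

lemma inj_take_drop: "inj (\<lambda>xs. (take j xs, drop j xs))"
  by (rule injI) (metis append_take_drop_id prod.inject)

lemma concat_eq_same_lengths:
  "map length xs = map length ys \<Longrightarrow> concat xs = concat ys \<Longrightarrow> xs = ys"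
proof (induction xs arbitrary: ys)
  case (Cons x xs)
  then obtain y ys' where "ys = y # ys'" and "length x = length y" and "map length xs = map length ys'"
    by (cases ys) auto
  with Cons show ?case
    by (simp add: append_eq_append_conv)
qed simp

lemma one_less_card_field: "1 < real CARD('f::{field,finite})"
proof -
  have "card {0::'f, 1} \<le> CARD('f)"
    by (rule card_mono) auto
  then show ?thesis
    by simp
qed

lemma sum_inverse_powers_Suc:
  fixes x :: "'a::field"
  shows "(\<Sum>i<Suc t. 1 / x ^ i) = 1 + (\<Sum>i<t. 1 / x ^ i) / x"
  by (subst sum.lessThan_Suc_shift) (simp add: sum_divide_distrib mult.commute divide_divide_eq_left)

section \<open>Entropy on a finite probability space\<close>

lemma pmf_map_finite:
  fixes P :: "'w::finite pmf"
  shows "pmf (map_pmf X P) x = (\<Sum>w | X w = x. pmf P w)"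
  by (simp add: pmf_map measure_measure_pmf_finite vimage_def)

lemma pmf_map_pos: "w \<in> set_pmf P \<Longrightarrow> 0 < pmf (map_pmf X P) (X w)"
  by (simp add: pmf_positive)

lemma sum_pmf_regroup:
  fixes P :: "'w::finite pmf"
  shows "(\<Sum>w\<in>UNIV. pmf P w * \<phi> (X w)) = (\<Sum>x\<in>range X. pmf (map_pmf X P) x * \<phi> x)"
proof -
  have "(\<Sum>w\<in>UNIV. pmf P w * \<phi> (X w)) = (\<Sum>x\<in>range X. \<Sum>w\<in>{w\<in>UNIV. X w = x}. pmf P w * \<phi> (X w))"
    by (rule sum.image_gen) simp
  also have "\<dots> = (\<Sum>x\<in>range X. pmf (map_pmf X P) x * \<phi> x)"
    by (intro sum.cong refl) (simp add: pmf_map_finite sum_distrib_right)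
  finally show ?thesis .
qed

lemma ent_eq_expectation:
  fixes P :: "'w::finite pmf"
  shows "ent b P X = (\<Sum>w\<in>UNIV. pmf P w * - log b (pmf (map_pmf X P) (X w)))"
proof -
  have "(\<Sum>w\<in>UNIV. pmf P w * - log b (pmf (map_pmf X P) (X w)))
      = (\<Sum>x\<in>range X. pmf (map_pmf X P) x * - log b (pmf (map_pmf X P) x))"
    by (rule sum_pmf_regroup)
  also have "\<dots> = (\<Sum>x\<in>set_pmf (map_pmf X P). pmf (map_pmf X P) x * - log b (pmf (map_pmf X P) x))"
    by (rule sum.mono_neutral_right) (auto simp: pmf_eq_0_set_pmf)
  finally show ?thesis
    unfolding ent_def by (simp add: sum_negf)
qed

lemma ent_cong:
  assumes "\<And>w. w \<in> set_pmf P \<Longrightarrow> X w = Y w"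
  shows "ent b P X = ent b P Y"
proof -
  have "map_pmf X P = map_pmf Y P"
    by (rule map_pmf_cong) (use assms in auto)
  then show ?thesis
    unfolding ent_def by simp
qed

lemma ent_map_pmf_cong:
  assumes "map_pmf X P = map_pmf Y P"
  shows "ent b P (\<lambda>w. g (X w)) = ent b P (\<lambda>w. g (Y w))"
  using assms unfolding ent_def by (simp flip: map_pmf_comp)

lemma ent_comp_le:
  fixes P :: "'w::finite pmf"
  assumes b: "1 < b"
  shows "ent b P (\<lambda>w. g (X w)) \<le> ent b P X"
  unfolding ent_eq_expectation
proof (rule sum_mono)
  fix w
  show "pmf P w * - log b (pmf (map_pmf (\<lambda>w. g (X w)) P) (g (X w)))
        \<le> pmf P w * - log b (pmf (map_pmf X P) (X w))"
  proof (cases "w \<in> set_pmf P")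
    case True
    have "pmf (map_pmf X P) (X w) \<le> pmf (map_pmf (\<lambda>w. g (X w)) P) (g (X w))"
      unfolding pmf_map_finite by (rule sum_mono2) auto
    with b pmf_map_pos[OF True, of X]
    have "log b (pmf (map_pmf X P) (X w)) \<le> log b (pmf (map_pmf (\<lambda>w. g (X w)) P) (g (X w)))"
      by simp
    then show ?thesis
      by (intro mult_left_mono) auto
  qed (simp add: set_pmf_iff)
qed

lemma ent_inj_comp:
  fixes P :: "'w::finite pmf"
  assumes b: "1 < b" and "inj g"
  shows "ent b P (\<lambda>w. g (X w)) = ent b P X"
proof (rule antisym)
  have "ent b P X = ent b P (\<lambda>w. inv g (g (X w)))"
    using \<open>inj g\<close> by simp
  then show "ent b P X \<le> ent b P (\<lambda>w. g (X w))"
    using ent_comp_le[OF b] by metis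
qed (rule ent_comp_le[OF b])

definition determines :: "'w pmf \<Rightarrow> ('w \<Rightarrow> 'a) \<Rightarrow> ('w \<Rightarrow> 'b) \<Rightarrow> bool" where
  "determines P Y X \<longleftrightarrow> (\<forall>w\<in>set_pmf P. \<forall>v\<in>set_pmf P. Y w = Y v \<longrightarrow> X w = X v)"

lemma determinesI:
  "(\<And>w v. w \<in> set_pmf P \<Longrightarrow> v \<in> set_pmf P \<Longrightarrow> Y w = Y v \<Longrightarrow> X w = X v) \<Longrightarrow> determines P Y X"
  unfolding determines_def by blast

lemma determinesD:
  "determines P Y X \<Longrightarrow> w \<in> set_pmf P \<Longrightarrow> v \<in> set_pmf P \<Longrightarrow> Y w = Y v \<Longrightarrow> X w = X v"
  unfolding determines_def by blast

lemma determines_fun: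
  assumes "determines P Y X"
  obtains g where "\<And>w. w \<in> set_pmf P \<Longrightarrow> X w = g (Y w)"
proof
  fix w assume w: "w \<in> set_pmf P"
  define v where "v = (SOME v. v \<in> set_pmf P \<and> Y v = Y w)"
  have "v \<in> set_pmf P \<and> Y v = Y w"
    unfolding v_def by (rule someI[of _ w]) (use w in simp)
  then show "X w = (\<lambda>y. X (SOME v. v \<in> set_pmf P \<and> Y v = y)) (Y w)"
    using determinesD[OF assms w] unfolding v_def by metis
qed

lemma ent_le_if_determines:
  fixes P :: "'w::finite pmf"
  assumes b: "1 < b" and "determines P Y X"
  shows "ent b P X \<le> ent b P Y"
proof -
  obtain g where "\<And>w. w \<in> set_pmf P \<Longrightarrow> X w = g (Y w)"
    using determines_fun[OF assms(2)] by blast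
  then have "ent b P X = ent b P (\<lambda>w. g (Y w))"
    by (rule ent_cong)
  also have "\<dots> \<le> ent b P Y"
    by (rule ent_comp_le[OF b])
  finally show ?thesis .
qed

lemma ent_eq_if_determines:
  fixes P :: "'w::finite pmf"
  assumes "1 < b" and "determines P X Y" and "determines P Y X"
  shows "ent b P X = ent b P Y"
  using ent_le_if_determines[OF assms(1,2)] ent_le_if_determines[OF assms(1,3)] by simp

lemma cond_ent_nonneg:
  fixes P :: "'w::finite pmf"
  assumes "1 < b"
  shows "0 \<le> cond_ent b P X Y"
  using ent_comp_le[OF assms, of P snd "\<lambda>w. (X w, Y w)"] unfolding cond_ent_def by simp

lemma pmf_joint_eq_if_cond_ent_zero:
  fixes P :: "'w::finite pmf"
  assumes b: "1 < b" and zero: "cond_ent b P X Y = 0" and w: "w \<in> set_pmf P"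
  shows "pmf (map_pmf (\<lambda>w. (X w, Y w)) P) (X w, Y w) = pmf (map_pmf Y P) (Y w)"
proof -
  let ?pxy = "\<lambda>w. pmf (map_pmf (\<lambda>w. (X w, Y w)) P) (X w, Y w)"
  let ?py = "\<lambda>w. pmf (map_pmf Y P) (Y w)"
  let ?t = "\<lambda>w. pmf P w * (log b (?py w) - log b (?pxy w))"
  have le: "?pxy w \<le> ?py w" for w
    unfolding pmf_map_finite by (rule sum_mono2) auto
  have "0 \<le> ?t w" for w
  proof (cases "w \<in> set_pmf P")
    case True
    with b le[of w] pmf_map_pos[OF True, of "\<lambda>w. (X w, Y w)"] show ?thesis
      by simp
  qed (simp add: set_pmf_iff)
  moreover have "(\<Sum>w\<in>UNIV. ?t w) = 0"
    using zero unfolding cond_ent_def ent_eq_expectation[of b P "\<lambda>w. (X w, Y w)"] ent_eq_expectation[of b P Y]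
    by (simp add: sum_subtractf[symmetric] algebra_simps)
  ultimately have "?t w = 0"
    by (simp add: sum_nonneg_eq_0_iff)
  moreover have pos: "0 < pmf P w" "0 < ?pxy w" "0 < ?py w"
    using w pmf_map_pos[OF w] by (auto simp: pmf_positive)
  ultimately have "log b (?pxy w) = log b (?py w)"
    by simp
  with b pos show ?thesis
    by (smt (verit) log_less_cancel_iff)
qed

lemma determines_if_cond_ent_zero:
  fixes P :: "'w::finite pmf"
  assumes b: "1 < b" and zero: "cond_ent b P X Y = 0"
  shows "determines P Y X"
proof (rule determinesI, rule ccontr)
  fix v w assume v: "v \<in> set_pmf P" and w: "w \<in> set_pmf P" and "Y v = Y w" and "X v \<noteq> X w"
  then have "insert v {u. (X u, Y u) = (X w, Y w)} \<subseteq> {u. Y u = Y w}" and "v \<notin> {u. (X u, Y u) = (X w, Y w)}"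
    by auto
  then have "(\<Sum>u\<in>insert v {u. (X u, Y u) = (X w, Y w)}. pmf P u) \<le> pmf (map_pmf Y P) (Y w)"
    unfolding pmf_map_finite by (intro sum_mono2) auto
  also have "\<dots> = pmf (map_pmf (\<lambda>w. (X w, Y w)) P) (X w, Y w)"
    using pmf_joint_eq_if_cond_ent_zero[OF b zero w] by simp
  finally have "pmf P v \<le> 0"
    using \<open>v \<notin> _\<close> by (simp add: pmf_map_finite)
  with v show False
    by (simp add: set_pmf_iff pmf_le_0_iff)
qed

lemma ent_const: "ent b P (\<lambda>w. c) = 0"
  unfolding ent_def by simp

lemma cond_ent_const:
  fixes P :: "'w::finite pmf"
  assumes "1 < b"
  shows "cond_ent b P X (\<lambda>w. c) = ent b P X"
  using ent_inj_comp[OF assms, of "\<lambda>x. (x, c)"] unfolding cond_ent_def ent_const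
  by (simp add: inj_def)

lemma ent_pmf_of_set:
  assumes "map_pmf X P = pmf_of_set S" and "finite S" and "S \<noteq> {}"
  shows "ent b P X = log b (card S)"
  unfolding ent_def assms(1) using assms(2,3)
  by (simp add: log_divide card_gt_0_iff)

lemma ent_le_log_card:
  fixes P :: "'w::finite pmf"
  assumes b: "1 < b" and S: "finite S" and XS: "\<And>w. w \<in> set_pmf P \<Longrightarrow> X w \<in> S"
  shows "ent b P X \<le> log b (card S)"
proof -
  interpret information_space "measure_pmf P" b
    by standard (rule b)
  have sd: "simple_distributed (measure_pmf P) X (pmf (map_pmf X P))"
    by (rule measure_pmf.simple_distributedI) (auto simp: simple_function_def pmf_map)
  have "prob_space.entropy (measure_pmf P) b (count_space (X ` space (measure_pmf P))) X
      = - (\<Sum>x\<in>X ` space (measure_pmf P). pmf (map_pmf X P) x * log b (pmf (map_pmf X P) x))"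
    by (rule entropy_simple_distributed[OF sd])
  also have "\<dots> = ent b P X"
    unfolding ent_def
    by (intro arg_cong[where f=uminus] sum.mono_neutral_right)
      (auto simp: pmf_eq_0_set_pmf[of "map_pmf X P", simplified])
  finally have "ent b P X = prob_space.entropy (measure_pmf P) b (count_space (X ` space (measure_pmf P))) X" ..
  also have "\<dots> \<le> log b (card (X ` space (measure_pmf P) \<inter> {x. pmf (map_pmf X P) x \<noteq> 0}))"
    by (rule entropy_le_card_not_0[OF sd])
  also have "X ` space (measure_pmf P) \<inter> {x. pmf (map_pmf X P) x \<noteq> 0} = X ` set_pmf P"
    by (auto simp: set_pmf_iff[symmetric])
  also have "log b (card (X ` set_pmf P)) \<le> log b (card S)"
  proof -
    have "card (X ` set_pmf P) \<le> card S"
      by (rule card_mono[OF S]) (use XS in auto)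
    moreover have "0 < card (X ` set_pmf P)"
      using set_pmf_not_empty[of P] by (auto simp: card_gt_0_iff)
    ultimately show ?thesis
      using b by simp
  qed
  finally show ?thesis .
qed

lemma ent_list_le:
  fixes P :: "'w::finite pmf" and X :: "'w \<Rightarrow> 'a::finite list"
  assumes b: "1 < b" and len: "\<And>w. w \<in> set_pmf P \<Longrightarrow> length (X w) = n"
  shows "ent b P X \<le> n * log b CARD('a)"
proof -
  have "ent b P X \<le> log b (card {xs. set xs \<subseteq> (UNIV :: 'a set) \<and> length xs = n})"
    by (rule ent_le_log_card[OF b finite_lists_length_eq]) (auto simp: len)
  also have "\<dots> = n * log b CARD('a)"
    using card_lists_length_eq[of "UNIV :: 'a set" n] by (simp add: log_nat_power)
  finally show ?thesis .
qed

lemma mut_inf_eq_if_determines: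
  fixes P :: "'w::finite pmf"
  assumes b: "1 < b" and "determines P Y Y'" and "determines P Y' Y"
  shows "mut_inf b P X Y = mut_inf b P X Y'"
proof -
  have "ent b P Y = ent b P Y'"
    by (rule ent_eq_if_determines[OF b assms(2,3)])
  moreover have "ent b P (\<lambda>w. (X w, Y w)) = ent b P (\<lambda>w. (X w, Y' w))"
    using determinesD[OF assms(2)] determinesD[OF assms(3)]
    by (intro ent_eq_if_determines[OF b] determinesI) (metis prod.inject)+
  ultimately show ?thesis
    unfolding mut_inf_def by simp
qed

lemma ent_uniform_lists_of_lists:
  fixes P :: "'w::finite pmf" and M :: "'w \<Rightarrow> 'a::finite list list"
  assumes unif: "map_pmf M P = pmf_of_set {xs. length xs = K \<and> (\<forall>x\<in>set xs. length x = L)}"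
  shows "ent b P M = real (L * K) * log b CARD('a)"
    and "\<And>w. w \<in> set_pmf P \<Longrightarrow> length (M w) = K \<and> (\<forall>x\<in>set (M w). length x = L)"
proof -
  let ?Ls = "{x :: 'a list. set x \<subseteq> UNIV \<and> length x = L}"
  let ?Ms = "{xs :: 'a list list. length xs = K \<and> (\<forall>x\<in>set xs. length x = L)}"
  have Ms: "?Ms = {xs. set xs \<subseteq> ?Ls \<and> length xs = K}"
    by auto
  have "finite ?Ls" and "card ?Ls = CARD('a) ^ L"
    by (rule finite_lists_length_eq card_lists_length_eq; simp)+
  then have "finite ?Ms" and "card ?Ms = CARD('a) ^ (L * K)"
    unfolding Ms by (simp_all only: finite_lists_length_eq card_lists_length_eq power_mult)
  moreover have "replicate K (replicate L undefined) \<in> ?Ms"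
    by simp
  then have "?Ms \<noteq> {}"
    by blast
  ultimately show "ent b P M = real (L * K) * log b CARD('a)"
    using ent_pmf_of_set[OF unif] by (simp add: log_nat_power)
  show "length (M w) = K \<and> (\<forall>x\<in>set (M w). length x = L)" if "w \<in> set_pmf P" for w
  proof -
    have "M w \<in> set_pmf (map_pmf M P)"
      using that by simp
    with \<open>finite ?Ms\<close> \<open>?Ms \<noteq> {}\<close> show ?thesis
      unfolding unif by simp
  qed
qed

lemma determines_restrict:
  "S \<subseteq> C \<Longrightarrow> determines P (\<lambda>w. restrict (f w) C) (\<lambda>w. restrict (f w) S)"
  by (intro determinesI) (auto simp: restrict_def fun_eq_iff, metis subsetD)

lemma simple_function_measure_pmf: "simple_function (measure_pmf P) X" for P :: "'w::finite pmf"
  unfolding simple_function_def by auto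

lemma simple_distributed_measure_pmf:
  fixes P :: "'w::finite pmf"
  shows "simple_distributed (measure_pmf P) X (pmf (map_pmf X P))"
  by (rule measure_pmf.simple_distributedI[OF simple_function_measure_pmf]) (auto simp: pmf_map)

lemma ent_submodular:
  fixes P :: "'w::finite pmf"
  assumes b: "1 < b"
  shows "ent b P (\<lambda>w. (X w, Y w, Z w)) + ent b P Z \<le> ent b P (\<lambda>w. (X w, Z w)) + ent b P (\<lambda>w. (Y w, Z w))"
proof -
  interpret information_space "measure_pmf P" b
    by standard (rule b)
  let ?pxyz = "pmf (map_pmf (\<lambda>w. (X w, Y w, Z w)) P)"
  let ?pxz = "pmf (map_pmf (\<lambda>w. (X w, Z w)) P)"
  let ?pyz = "pmf (map_pmf (\<lambda>w. (Y w, Z w)) P)"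
  let ?pz = "pmf (map_pmf Z P)"
  let ?\<phi> = "\<lambda>(x, y, z). log b (?pxyz (x, y, z) / (?pxz (x, z) * (?pyz (y, z) / ?pz z)))"
  have "0 \<le> (\<Sum>(x, y, z)\<in>(\<lambda>w. (X w, Y w, Z w)) ` space (measure_pmf P). ?pxyz (x, y, z) * ?\<phi> (x, y, z))"
    using conditional_mutual_information_nonneg[OF simple_function_measure_pmf simple_function_measure_pmf simple_function_measure_pmf, of X Y Z]
    unfolding conditional_mutual_information_eq[OF simple_distributed_measure_pmf simple_distributed_measure_pmf
      simple_distributed_measure_pmf simple_distributed_measure_pmf] by (simp add: split_beta)
  also have "\<dots> = (\<Sum>w\<in>UNIV. pmf P w * ?\<phi> (X w, Y w, Z w))"
    using sum_pmf_regroup[of P ?\<phi> "\<lambda>w. (X w, Y w, Z w)"] by (simp add: split_beta)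
  also have "\<dots> = (\<Sum>w\<in>UNIV. pmf P w * - log b (?pxz (X w, Z w)) + pmf P w * - log b (?pyz (Y w, Z w))
                   - pmf P w * - log b (?pxyz (X w, Y w, Z w)) - pmf P w * - log b (?pz (Z w)))"
  proof (intro sum.cong refl)
    fix w
    show "pmf P w * ?\<phi> (X w, Y w, Z w) = pmf P w * - log b (?pxz (X w, Z w)) + pmf P w * - log b (?pyz (Y w, Z w))
                   - pmf P w * - log b (?pxyz (X w, Y w, Z w)) - pmf P w * - log b (?pz (Z w))"
    proof (cases "w \<in> set_pmf P")
      case True
      then have "0 < ?pxyz (X w, Y w, Z w)" "0 < ?pxz (X w, Z w)" "0 < ?pyz (Y w, Z w)" "0 < ?pz (Z w)"
        using pmf_map_pos[OF True, of "\<lambda>w. (X w, Y w, Z w)"] pmf_map_pos[OF True, of "\<lambda>w. (X w, Z w)"]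
          pmf_map_pos[OF True, of "\<lambda>w. (Y w, Z w)"] pmf_map_pos[OF True, of Z] by auto
      with b have "?\<phi> (X w, Y w, Z w) = log b (?pxyz (X w, Y w, Z w)) - log b (?pxz (X w, Z w))
          - log b (?pyz (Y w, Z w)) + log b (?pz (Z w))"
        by (simp add: log_divide log_mult)
      then show ?thesis
        by (simp only:) (simp add: algebra_simps)
    qed (simp add: set_pmf_iff)
  qed
  also have "\<dots> = ent b P (\<lambda>w. (X w, Z w)) + ent b P (\<lambda>w. (Y w, Z w)) - ent b P (\<lambda>w. (X w, Y w, Z w)) - ent b P Z"
    unfolding ent_eq_expectation by (simp only: sum.distrib sum_subtractf)
  finally show ?thesis
    by simp
qed

lemma ent_subadditive:
  fixes P :: "'w::finite pmf"
  assumes b: "1 < b"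
  shows "ent b P (\<lambda>w. (X w, Y w)) \<le> ent b P X + ent b P Y"
proof -
  have "ent b P (\<lambda>w. (X w, Y w, ())) + ent b P (\<lambda>w. ()) \<le> ent b P (\<lambda>w. (X w, ())) + ent b P (\<lambda>w. (Y w, ()))"
    by (rule ent_submodular[OF b])
  moreover have "ent b P (\<lambda>w. (X w, Y w, ())) = ent b P (\<lambda>w. (X w, Y w))"
    and "ent b P (\<lambda>w. (X w, ())) = ent b P X" and "ent b P (\<lambda>w. (Y w, ())) = ent b P Y"
    by (intro ent_eq_if_determines[OF b] determinesI; simp)+
  ultimately show ?thesis
    by (simp add: ent_const)
qed

lemma cond_ent_mono:
  fixes P :: "'w::finite pmf"
  assumes b: "1 < b" and "determines P X' X"
  shows "cond_ent b P X Y \<le> cond_ent b P X' Y"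
proof -
  have "ent b P (\<lambda>w. (X w, Y w)) \<le> ent b P (\<lambda>w. (X' w, Y w))"
  proof (rule ent_le_if_determines[OF b], rule determinesI)
    fix w v assume "w \<in> set_pmf P" "v \<in> set_pmf P" "(X' w, Y w) = (X' v, Y v)"
    then show "(X w, Y w) = (X v, Y v)"
      using determinesD[OF assms(2), of w v] by simp
  qed
  then show ?thesis
    unfolding cond_ent_def by simp
qed

lemma cond_ent_antimono_cond:
  fixes P :: "'w::finite pmf"
  assumes b: "1 < b" and Y_Z: "determines P Y Z"
  shows "cond_ent b P X Y \<le> cond_ent b P X Z"
proof -
  have "ent b P (\<lambda>w. (X w, Y w, Z w)) + ent b P Z \<le> ent b P (\<lambda>w. (X w, Z w)) + ent b P (\<lambda>w. (Y w, Z w))"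
    by (rule ent_submodular[OF b])
  moreover have "ent b P (\<lambda>w. (X w, Y w, Z w)) = ent b P (\<lambda>w. (X w, Y w))"
    and "ent b P (\<lambda>w. (Y w, Z w)) = ent b P Y"
    by (intro ent_eq_if_determines[OF b] determinesI; use determinesD[OF Y_Z] in blast)+
  ultimately show ?thesis
    unfolding cond_ent_def by simp
qed

lemma cond_ent_map_le_sum_list:
  fixes P :: "'w::finite pmf"
  assumes b: "1 < b"
  shows "cond_ent b P (\<lambda>w. map (\<lambda>n. X n w) ns) Y \<le> (\<Sum>n\<leftarrow>ns. cond_ent b P (X n) Y)"
proof (induction ns)
  case Nil
  have "ent b P (\<lambda>w. (map (\<lambda>n. X n w) [], Y w)) = ent b P Y"
    by (intro ent_eq_if_determines[OF b] determinesI) simp_all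
  then show ?case
    unfolding cond_ent_def by simp
next
  case (Cons n ns)
  let ?Xs = "\<lambda>w. map (\<lambda>n. X n w) ns"
  have "ent b P (\<lambda>w. (X n w, ?Xs w, Y w)) + ent b P Y \<le> ent b P (\<lambda>w. (X n w, Y w)) + ent b P (\<lambda>w. (?Xs w, Y w))"
    by (rule ent_submodular[OF b])
  moreover have "ent b P (\<lambda>w. (map (\<lambda>n. X n w) (n # ns), Y w)) = ent b P (\<lambda>w. (X n w, ?Xs w, Y w))"
    by (intro ent_eq_if_determines[OF b] determinesI) simp_all
  ultimately have "cond_ent b P (\<lambda>w. map (\<lambda>n. X n w) (n # ns)) Y \<le> cond_ent b P (X n) Y + cond_ent b P ?Xs Y"
    unfolding cond_ent_def by simp
  with Cons.IH show ?case
    by simp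
qed

lemma ent_map_le_sum_list:
  fixes P :: "'w::finite pmf"
  assumes b: "1 < b"
  shows "ent b P (\<lambda>w. map (\<lambda>n. X n w) ns) \<le> (\<Sum>n\<leftarrow>ns. ent b P (X n))"
  using cond_ent_map_le_sum_list[OF b, of P X ns "\<lambda>w. ()"] by (simp add: cond_ent_const[OF b])


lemma cond_ent_markov:
  fixes P :: "'w::finite pmf"
  assumes b: "1 < b"
    and F_Q: "determines P F Q"
    and A: "determines P (\<lambda>w. (Q w, U w, V w, R w)) A"
    and indep: "mut_inf b P (\<lambda>w. (U w, V w)) (\<lambda>w. (F w, R w)) = 0"
  shows "cond_ent b P A (\<lambda>w. (U w, F w, R w)) = cond_ent b P A (\<lambda>w. (U w, Q w, R w))"
proof -
  define Z where "Z w = (U w, Q w, R w)" for w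
  have Q_eq: "Q w = Q v" if "w \<in> set_pmf P" "v \<in> set_pmf P" "F w = F v" for w v
    using determinesD[OF F_Q that] .
  have A_eq: "A w = A v" if "w \<in> set_pmf P" "v \<in> set_pmf P" "(Q w, U w, V w, R w) = (Q v, U v, V v, R v)" for w v
    using determinesD[OF A that] .
  have "determines P (\<lambda>w. (U w, F w, R w)) Z"
    by (rule determinesI) (auto simp: Z_def intro: Q_eq)
  then have le: "cond_ent b P A (\<lambda>w. (U w, F w, R w)) \<le> cond_ent b P A Z"
    by (rule cond_ent_antimono_cond[OF b])
  have ent_AUFR: "ent b P (\<lambda>w. (A w, U w, F w, R w)) = ent b P (\<lambda>w. (F w, A w, Z w))"
    and ent_UFR: "ent b P (\<lambda>w. (U w, F w, R w)) = ent b P (\<lambda>w. (F w, Z w))"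
    and ent_VAZ: "ent b P (\<lambda>w. (V w, A w, Z w)) = ent b P (\<lambda>w. (V w, (Q w, R w), U w))"
    and ent_VFAZ: "ent b P (\<lambda>w. (V w, F w, A w, Z w)) = ent b P (\<lambda>w. ((U w, V w), (F w, R w)))"
    and ent_Z: "ent b P Z = ent b P (\<lambda>w. ((Q w, R w), U w))"
    and ent_UV: "ent b P (\<lambda>w. (V w, U w)) = ent b P (\<lambda>w. (U w, V w))"
    by (intro ent_eq_if_determines[OF b] determinesI; auto simp: Z_def intro: Q_eq A_eq)+
  \<comment> \<open>Conversely I(A; F | Z) \<le> I(V; F | Z) \<le> I(U, V; F, R) = 0, as A is a function of (V, Z).\<close>
  have "ent b P (\<lambda>w. (V w, F w, A w, Z w)) + ent b P (\<lambda>w. (A w, Z w))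
      \<le> ent b P (\<lambda>w. (V w, A w, Z w)) + ent b P (\<lambda>w. (F w, A w, Z w))"
    by (rule ent_submodular[OF b])
  moreover have "ent b P (\<lambda>w. (V w, (Q w, R w), U w)) + ent b P U
      \<le> ent b P (\<lambda>w. (V w, U w)) + ent b P (\<lambda>w. ((Q w, R w), U w))"
    by (rule ent_submodular[OF b])
  moreover have "ent b P (\<lambda>w. (U w, F w, R w)) \<le> ent b P U + ent b P (\<lambda>w. (F w, R w))"
    using ent_subadditive[OF b, of P U "\<lambda>w. (F w, R w)"] by simp
  ultimately have "cond_ent b P A Z \<le> cond_ent b P A (\<lambda>w. (U w, F w, R w))"
    using indep ent_AUFR ent_UFR ent_VAZ ent_VFAZ ent_Z ent_UV unfolding cond_ent_def mut_inf_def by simp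
  with le show ?thesis
    unfolding Z_def by simp
qed

lemma cond_ent_le_length_bound:
  fixes P :: "'w::finite pmf" and X :: "'w \<Rightarrow> 'f::finite list list"
  assumes b: "1 < b"
    and lengths: "determines P Y (\<lambda>w. map length (X w))"
    and bound: "\<And>w. w \<in> set_pmf P \<Longrightarrow> length (concat (X w)) \<le> D"
  shows "cond_ent b P X Y \<le> D * log b CARD('f)"
proof -
  \<comment> \<open>Knowing the lengths from Y, X is recovered from its concatenation padded to length D.\<close>
  define pad where "pad w = take D (concat (X w) @ replicate D undefined)" for w
  have concat_eq: "concat (X w) = take (length (concat (X w))) (pad w)" if "w \<in> set_pmf P" for w
    unfolding pad_def using bound[OF that] by (simp add: min_def)
  have "determines P (\<lambda>w. (pad w, Y w)) (\<lambda>w. (X w, Y w))"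
  proof (rule determinesI)
    fix w v assume w: "w \<in> set_pmf P" and v: "v \<in> set_pmf P" and eq: "(pad w, Y w) = (pad v, Y v)"
    then have "map length (X w) = map length (X v)"
      using determinesD[OF lengths w v] by simp
    moreover from this have "concat (X w) = concat (X v)"
      using concat_eq[OF w] concat_eq[OF v] eq by (simp add: length_concat)
    ultimately show "(X w, Y w) = (X v, Y v)"
      using eq concat_eq_same_lengths by simp
  qed
  then have "ent b P (\<lambda>w. (X w, Y w)) \<le> ent b P (\<lambda>w. (pad w, Y w))"
    by (rule ent_le_if_determines[OF b])
  also have "\<dots> \<le> ent b P pad + ent b P Y"
    by (rule ent_subadditive[OF b])
  also have "ent b P pad \<le> D * log b CARD('f)"
    by (rule ent_list_le[OF b]) (simp add: pad_def)
  finally show ?thesis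
    unfolding cond_ent_def by simp
qed


section \<open>The download cost of a private retrieval scheme\<close>

text \<open>R is the databases' common randomness and RU S the part of it held by the user, indexed
  by S from the admissible index sets Adm; the messages are W 1, ..., W K.\<close>

locale spir_scheme =
  fixes P :: "'w::finite pmf" and b :: real and N K L D :: nat
    and W :: "nat \<Rightarrow> 'w \<Rightarrow> 'm" and F :: "'w \<Rightarrow> 'u" and R :: "'w \<Rightarrow> 'r"
    and Adm :: "'s set" and RU :: "'s \<Rightarrow> 'w \<Rightarrow> 'ru"
    and Q :: "nat \<Rightarrow> 's \<Rightarrow> nat \<Rightarrow> 'w \<Rightarrow> 'qry"
    and A :: "nat \<Rightarrow> 's \<Rightarrow> nat \<Rightarrow> 'w \<Rightarrow> 'f::finite list"
  assumes base: "1 < b" and N: "1 \<le> N" and K: "1 \<le> K"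
    and Adm_finite: "finite Adm" and Adm_nonempty: "Adm \<noteq> {}"
    and RU_determined: "\<And>S. S \<in> Adm \<Longrightarrow> determines P R (RU S)"
    and ent_message: "\<And>i. i \<in> {1..K} \<Longrightarrow> ent b P (W i) \<le> L"
    and ent_messages: "ent b P (\<lambda>w. map (\<lambda>i. W i w) [1..<K+1]) = K * L"
    and messages_indep: "mut_inf b P (\<lambda>w. map (\<lambda>i. W i w) [1..<K+1]) (\<lambda>w. (F w, R w)) = 0"
    and cond_ent_queries: "\<And>k S. k \<in> {1..K} \<Longrightarrow> S \<in> Adm \<Longrightarrow>
        cond_ent b P (\<lambda>w. map (\<lambda>n. Q k S n w) [1..<N+1]) F = 0"
    and cond_ent_answers: "\<And>k S n. k \<in> {1..K} \<Longrightarrow> S \<in> Adm \<Longrightarrow> n \<in> {1..N} \<Longrightarrow>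
        cond_ent b P (A k S n) (\<lambda>w. (Q k S n w, map (\<lambda>i. W i w) [1..<K+1], R w)) = 0"
    and answer_length: "\<And>k S n. \<exists>g. \<forall>w\<in>set_pmf P. length (A k S n w) = g (Q k S n w)"
    and cond_ent_decoding: "\<And>k S. k \<in> {1..K} \<Longrightarrow> S \<in> Adm \<Longrightarrow>
        cond_ent b P (W k) (\<lambda>w. (F w, map (\<lambda>n. A k S n w) [1..<N+1], RU S w)) = 0"
    and privacy: "\<And>k k' S n. k \<in> {1..K} \<Longrightarrow> k' \<in> {1..K} \<Longrightarrow> S \<in> Adm \<Longrightarrow> n \<in> {1..N} \<Longrightarrow>
        \<exists>S'\<in>Adm. map_pmf (\<lambda>w. (Q k S n w, A k S n w, map (\<lambda>i. W i w) [1..<K+1], R w)) P =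
                 map_pmf (\<lambda>w. (Q k' S' n w, A k' S' n w, map (\<lambda>i. W i w) [1..<K+1], R w)) P"
    and download: "\<And>k S w. k \<in> {1..K} \<Longrightarrow> S \<in> Adm \<Longrightarrow> w \<in> set_pmf P \<Longrightarrow>
        (\<Sum>n\<in>{1..N}. length (A k S n w)) \<le> D"
begin

definition messages :: "'w \<Rightarrow> 'm list" where
  "messages w = map (\<lambda>i. W i w) [1..<K+1]"

definition answers :: "nat \<Rightarrow> 's \<Rightarrow> 'w \<Rightarrow> 'f list list" where
  "answers k S w = map (\<lambda>n. A k S n w) [1..<N+1]"

definition answer_ent :: "nat \<Rightarrow> 's \<Rightarrow> nat \<Rightarrow> real" where
  "answer_ent k S j = cond_ent b P (answers k S) (\<lambda>w. (take j (messages w), F w, R w))"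

definition max_answer_ent :: "nat \<Rightarrow> nat \<Rightarrow> real" where
  "max_answer_ent k j = Max ((\<lambda>S. answer_ent k S j) ` Adm)"

lemma take_messages_Suc:
  assumes "k \<in> {1..K}"
  shows "take k (messages w) = take (k - 1) (messages w) @ [W k w]"
proof -
  have "messages w ! (k - 1) = W k w" and "k - 1 < length (messages w)"
    using assms by (auto simp: messages_def nth_append simp del: upt_Suc)
  then show ?thesis
    using take_Suc_conv_app_nth[of "k - 1" "messages w"] assms by simp
qed

lemma ent_messages_range_le:
  assumes "1 \<le> i" and "j \<le> K + 1"
  shows "ent b P (\<lambda>w. map (\<lambda>l. W l w) [i..<j]) \<le> (j - i) * L"
proof -
  have "ent b P (\<lambda>w. map (\<lambda>l. W l w) [i..<j]) \<le> (\<Sum>l\<leftarrow>[i..<j]. ent b P (W l))"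
    by (rule ent_map_le_sum_list[OF base])
  also have "\<dots> \<le> (\<Sum>l\<leftarrow>[i..<j]. real L)"
    by (rule sum_list_mono) (use assms ent_message in auto)
  also have "\<dots> = (j - i) * L"
    by (simp add: sum_list_triv)
  finally show ?thesis .
qed

lemma ent_take_messages_le: "j \<le> K \<Longrightarrow> ent b P (\<lambda>w. take j (messages w)) \<le> j * L"
  using ent_messages_range_le[of 1 "j+1"] by (simp add: messages_def take_map del: upt_Suc)

lemma ent_drop_messages_le: "ent b P (\<lambda>w. drop j (messages w)) \<le> (K - j) * L"
  using ent_messages_range_le[of "j+1" "K+1"] by (simp add: messages_def drop_map del: upt_Suc)

lemma cond_ent_message_ge:
  assumes k: "k \<in> {1..K}"
  shows "L \<le> cond_ent b P (W k) (\<lambda>w. (take (k - 1) (messages w), F w, R w))"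
proof -
  let ?FR = "\<lambda>w. (F w, R w)"
  have "K * L + ent b P ?FR = ent b P (\<lambda>w. (messages w, ?FR w))"
    using messages_indep ent_messages unfolding mut_inf_def messages_def by simp
  also have "\<dots> = ent b P (\<lambda>w. ((take k (messages w), ?FR w), drop k (messages w)))"
  proof -
    have "inj (\<lambda>(xs, y). ((take k xs, y), drop k xs))"
      using inj_take_drop[of k] by (auto simp: inj_def)
    from ent_inj_comp[OF base this, of P "\<lambda>w. (messages w, ?FR w)"] show ?thesis
      by simp
  qed
  also have "\<dots> \<le> ent b P (\<lambda>w. (take k (messages w), ?FR w)) + ent b P (\<lambda>w. drop k (messages w))"
    by (rule ent_subadditive[OF base])
  also have "ent b P (\<lambda>w. (take k (messages w), ?FR w)) = ent b P (\<lambda>w. (W k w, take (k - 1) (messages w), ?FR w))"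
    using k by (intro ent_eq_if_determines[OF base] determinesI) (auto simp: take_messages_Suc)
  finally have "K * L + ent b P ?FR
      \<le> ent b P (\<lambda>w. (W k w, take (k - 1) (messages w), ?FR w)) + ent b P (\<lambda>w. drop k (messages w))" .
  moreover have "ent b P (\<lambda>w. (take (k - 1) (messages w), ?FR w)) \<le> (k - 1) * L + ent b P ?FR"
    using ent_subadditive[OF base, of P "\<lambda>w. take (k - 1) (messages w)" ?FR] ent_take_messages_le[of "k - 1"] k
    by fastforce
  moreover note ent_drop_messages_le[of k]
  ultimately show ?thesis
    using k unfolding cond_ent_def by (simp add: of_nat_diff algebra_simps)
qed

lemma query_determined:
  assumes "k \<in> {1..K}" and "S \<in> Adm" and n: "n \<in> {1..N}"
  shows "determines P F (Q k S n)"
proof (rule determinesI)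
  fix w v assume "w \<in> set_pmf P" "v \<in> set_pmf P" "F w = F v"
  then have "map (\<lambda>n. Q k S n w) [1..<N+1] = map (\<lambda>n. Q k S n v) [1..<N+1]"
    using determinesD[OF determines_if_cond_ent_zero[OF base cond_ent_queries[OF assms(1,2)]]] by blast
  with n show "Q k S n w = Q k S n v"
    by (simp add: map_eq_conv del: upt_Suc)
qed

lemma answer_determined:
  "k \<in> {1..K} \<Longrightarrow> S \<in> Adm \<Longrightarrow> n \<in> {1..N} \<Longrightarrow>
    determines P (\<lambda>w. (Q k S n w, messages w, R w)) (A k S n)"
  unfolding messages_def by (rule determines_if_cond_ent_zero[OF base cond_ent_answers])

lemma message_determined:
  assumes k: "k \<in> {1..K}" and S: "S \<in> Adm"
  shows "determines P (\<lambda>w. (F w, answers k S w, R w)) (W k)"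
proof (rule determinesI)
  fix w v assume w: "w \<in> set_pmf P" and v: "v \<in> set_pmf P"
    and eq: "(F w, answers k S w, R w) = (F v, answers k S v, R v)"
  then have "RU S w = RU S v"
    using determinesD[OF RU_determined[OF S] w v] by simp
  with eq show "W k w = W k v"
    using determinesD[OF determines_if_cond_ent_zero[OF base cond_ent_decoding[OF k S]] w v]
    by (simp add: answers_def)
qed

lemma answer_ent_decoding:
  assumes k: "k \<in> {1..K}" and S: "S \<in> Adm"
  shows "L + answer_ent k S k \<le> answer_ent k S (k - 1)"
proof -
  let ?Y = "\<lambda>w. (take (k - 1) (messages w), F w, R w)"
  have "ent b P (\<lambda>w. (answers k S w, ?Y w)) = ent b P (\<lambda>w. (answers k S w, take k (messages w), F w, R w))"
  proof (intro ent_eq_if_determines[OF base] determinesI)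
    fix w v assume w: "w \<in> set_pmf P" and v: "v \<in> set_pmf P"
      and eq: "(answers k S w, ?Y w) = (answers k S v, ?Y v)"
    then have "W k w = W k v"
      using determinesD[OF message_determined[OF k S] w v] by simp
    with eq k show "(answers k S w, take k (messages w), F w, R w) = (answers k S v, take k (messages v), F v, R v)"
      by (simp add: take_messages_Suc)
  qed (use k in \<open>auto simp: take_messages_Suc\<close>)
  moreover have "ent b P (\<lambda>w. (take k (messages w), F w, R w)) = ent b P (\<lambda>w. (W k w, ?Y w))"
    using k by (intro ent_eq_if_determines[OF base] determinesI) (auto simp: take_messages_Suc)
  ultimately show ?thesis
    using cond_ent_message_ge[OF k] unfolding answer_ent_def cond_ent_def by simp
qed

lemma answer_cond_ent_query:
  assumes "k \<in> {1..K}" and "S \<in> Adm" and "n \<in> {1..N}" and "j \<le> K"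
  shows "cond_ent b P (A k S n) (\<lambda>w. (take j (messages w), F w, R w))
       = cond_ent b P (A k S n) (\<lambda>w. (take j (messages w), Q k S n w, R w))"
proof (rule cond_ent_markov[OF base query_determined[OF assms(1-3)]])
  show "determines P (\<lambda>w. (Q k S n w, take j (messages w), drop j (messages w), R w)) (A k S n)"
    using determinesD[OF answer_determined[OF assms(1-3)]]
    by (intro determinesI) (metis append_take_drop_id prod.inject)
  have "mut_inf b P (\<lambda>w. (take j (messages w), drop j (messages w))) (\<lambda>w. (F w, R w))
      = mut_inf b P messages (\<lambda>w. (F w, R w))"
  proof -
    have "inj (\<lambda>(xs, y). ((take j xs, drop j xs), y))"
      using inj_take_drop[of j] by (auto simp: inj_def)
    with ent_inj_comp[OF base this, of P "\<lambda>w. (messages w, F w, R w)"]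
      ent_inj_comp[OF base inj_take_drop[of j], of P messages]
    show ?thesis
      unfolding mut_inf_def by simp
  qed
  then show "mut_inf b P (\<lambda>w. (take j (messages w), drop j (messages w))) (\<lambda>w. (F w, R w)) = 0"
    using messages_indep unfolding messages_def by simp
qed

lemma answer_ent_le_max: "S \<in> Adm \<Longrightarrow> answer_ent k S j \<le> max_answer_ent k j"
  unfolding max_answer_ent_def using Adm_finite by (intro Max_ge) auto

lemma max_answer_ent_attained:
  obtains S where "S \<in> Adm" and "max_answer_ent k j = answer_ent k S j"
proof -
  have "max_answer_ent k j \<in> (\<lambda>S. answer_ent k S j) ` Adm"
    unfolding max_answer_ent_def using Adm_finite Adm_nonempty by (intro Max_in) auto
  with that show ?thesis
    by blast
qed

lemma max_answer_ent_nonneg: "0 \<le> max_answer_ent k j"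
proof -
  obtain S where "S \<in> Adm" and "max_answer_ent k j = answer_ent k S j"
    by (rule max_answer_ent_attained)
  then show ?thesis
    unfolding answer_ent_def using cond_ent_nonneg[OF base] by simp
qed

lemma max_answer_ent_decoding:
  assumes "k \<in> {1..K}"
  shows "L + max_answer_ent k k \<le> max_answer_ent k (k - 1)"
proof -
  obtain S where S: "S \<in> Adm" and "max_answer_ent k k = answer_ent k S k"
    by (rule max_answer_ent_attained)
  with answer_ent_decoding[OF assms S] answer_ent_le_max[OF S, of k "k - 1"] show ?thesis
    by simp
qed

text \<open>Privacy lets database n answer the query for message k+1 as if it were a query for
  message k, so each of the N answers carries at most the largest uncertainty at stage k.\<close>

lemma cond_ent_answer_le_max:
  assumes k: "1 \<le> k" "k < K" and S: "S \<in> Adm" and n: "n \<in> {1..N}"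
  shows "cond_ent b P (A (k+1) S n) (\<lambda>w. (take k (messages w), F w, R w)) \<le> max_answer_ent k k"
proof -
  have k1: "k + 1 \<in> {1..K}" and k0: "k \<in> {1..K}"
    using k by auto
  obtain S' where S': "S' \<in> Adm"
    and same_dist: "map_pmf (\<lambda>w. (Q (k+1) S n w, A (k+1) S n w, messages w, R w)) P
                  = map_pmf (\<lambda>w. (Q k S' n w, A k S' n w, messages w, R w)) P"
    using privacy[OF k1 k0 S n] unfolding messages_def by blast
  have "cond_ent b P (A (k+1) S n) (\<lambda>w. (take k (messages w), F w, R w))
      = cond_ent b P (A (k+1) S n) (\<lambda>w. (take k (messages w), Q (k+1) S n w, R w))"
    using answer_cond_ent_query[OF k1 S n] k by simp
  also have "\<dots> = cond_ent b P (A k S' n) (\<lambda>w. (take k (messages w), Q k S' n w, R w))"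
    unfolding cond_ent_def
    using ent_map_pmf_cong[OF same_dist, of b "\<lambda>(q, a, ms, r). (a, take k ms, q, r)"]
      ent_map_pmf_cong[OF same_dist, of b "\<lambda>(q, a, ms, r). (take k ms, q, r)"] by simp
  also have "\<dots> = cond_ent b P (A k S' n) (\<lambda>w. (take k (messages w), F w, R w))"
    using answer_cond_ent_query[OF k0 S' n] k by simp
  also have "\<dots> \<le> answer_ent k S' k"
    unfolding answer_ent_def
    by (rule cond_ent_mono[OF base], rule determinesI) (use n in \<open>simp add: answers_def map_eq_conv del: upt_Suc\<close>)
  also have "\<dots> \<le> max_answer_ent k k"
    by (rule answer_ent_le_max[OF S'])
  finally show ?thesis .
qed

lemma max_answer_ent_privacy:
  assumes "1 \<le> k" and "k < K"
  shows "max_answer_ent (k+1) k \<le> N * max_answer_ent k k"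
proof -
  obtain S where S: "S \<in> Adm" and max: "max_answer_ent (k+1) k = answer_ent (k+1) S k"
    by (rule max_answer_ent_attained)
  note max
  also have "\<dots> \<le> (\<Sum>n\<leftarrow>[1..<N+1]. cond_ent b P (A (k+1) S n) (\<lambda>w. (take k (messages w), F w, R w)))"
    unfolding answer_ent_def answers_def by (rule cond_ent_map_le_sum_list[OF base])
  also have "\<dots> \<le> (\<Sum>n\<leftarrow>[1..<N+1]. max_answer_ent k k)"
    by (rule sum_list_mono) (use cond_ent_answer_le_max[OF assms S] in auto)
  also have "\<dots> = N * max_answer_ent k k"
    by (simp add: sum_list_triv del: upt_Suc)
  finally show ?thesis .
qed

lemma max_answer_ent_first: "max_answer_ent 1 0 \<le> D * log b CARD('f)"
proof -
  have k: "1 \<in> {1..K}"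
    using K by simp
  obtain S where S: "S \<in> Adm" and "max_answer_ent 1 0 = answer_ent 1 S 0"
    by (rule max_answer_ent_attained)
  moreover have "answer_ent 1 S 0 \<le> D * log b CARD('f)"
    unfolding answer_ent_def
  proof (rule cond_ent_le_length_bound[OF base])
    show "determines P (\<lambda>w. (take 0 (messages w), F w, R w)) (\<lambda>w. map length (answers 1 S w))"
    proof (rule determinesI)
      fix w v assume w: "w \<in> set_pmf P" and v: "v \<in> set_pmf P"
        and eq: "(take 0 (messages w), F w, R w) = (take 0 (messages v), F v, R v)"
      have "length (A 1 S n w) = length (A 1 S n v)" if n: "n \<in> {1..N}" for n
      proof -
        obtain g where "\<forall>w\<in>set_pmf P. length (A 1 S n w) = g (Q 1 S n w)"
          using answer_length by blast
        with determinesD[OF query_determined[OF k S n] w v] eq w v show ?thesis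
          by simp
      qed
      then show "map length (answers 1 S w) = map length (answers 1 S v)"
        by (simp add: answers_def del: upt_Suc)
    qed
    show "length (concat (answers 1 S w)) \<le> D" if "w \<in> set_pmf P" for w
      using download[OF k S that]
      by (simp add: answers_def length_concat comp_def atLeastLessThanSuc_atLeastAtMost
          flip: sum_set_upt_conv_sum_list_nat del: upt_Suc)
  qed
  ultimately show ?thesis
    by simp
qed

lemma max_answer_ent_ge_geometric:
  assumes "t < K"
  shows "L * (\<Sum>i<t+1. 1 / real N ^ i) \<le> max_answer_ent (K - t) (K - t - 1)"
  using assms
proof (induction t)
  case 0
  then show ?case
    using max_answer_ent_decoding[of K] max_answer_ent_nonneg[of K K] K by simp
next
  case (Suc t)
  define k where "k = K - (t + 1)"
  have k: "1 \<le> k" "k < K" and Suc_k: "k + 1 = K - t"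
    using Suc.prems by (auto simp: k_def)
  have "L * (\<Sum>i<t+1. 1 / real N ^ i) / N \<le> max_answer_ent (k+1) k / N"
    using Suc.IH Suc.prems N by (intro divide_right_mono) (auto simp: Suc_k[symmetric])
  also have "\<dots> \<le> max_answer_ent k k"
    using max_answer_ent_privacy[OF k] N by (simp add: divide_le_eq mult.commute)
  finally have "L + L * (\<Sum>i<t+1. 1 / real N ^ i) / N \<le> max_answer_ent k (k - 1)"
    using max_answer_ent_decoding[of k] k by simp
  moreover have "(\<Sum>i<Suc t + 1. 1 / real N ^ i) = 1 + (\<Sum>i<t+1. 1 / real N ^ i) / N"
    by (metis Suc_eq_plus1 sum_inverse_powers_Suc)
  ultimately show ?case
    unfolding k_def by (simp add: distrib_left)
qed

theorem download_lower_bound: "L * (\<Sum>i<K. 1 / real N ^ i) \<le> D * log b CARD('f)"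
  using max_answer_ent_ge_geometric[of "K - 1"] max_answer_ent_first K by simp

end

section \<open>The concrete model\<close>

theorem lemma3:
  fixes P :: "'w::finite pmf"
    and N K L m :: nat
    and W :: "nat \<Rightarrow> 'w \<Rightarrow> 'f::{field,finite} list"
    and C :: "'c set"
    and Rs :: "'w \<Rightarrow> 'c \<Rightarrow> 'r"
    and F :: "'w \<Rightarrow> 'u"
    and Q :: "nat \<Rightarrow> 'c set \<Rightarrow> nat \<Rightarrow> 'w \<Rightarrow> 'qry"
    and A :: "nat \<Rightarrow> 'c set \<Rightarrow> nat \<Rightarrow> 'w \<Rightarrow> 'f list"
  defines "q \<equiv> real CARD('f)"
    and "Wall \<equiv> (\<lambda>w. map (\<lambda>j. W j w) [1..<K+1])"
    and "Wbar \<equiv> (\<lambda>k w. map (\<lambda>j. W j w) (filter (\<lambda>j. j \<noteq> k) [1..<K+1]))"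
    and "RS \<equiv> (\<lambda>w. restrict (Rs w) C)"
    and "RU \<equiv> (\<lambda>S w. restrict (Rs w) S)"
    and "RSmU \<equiv> (\<lambda>S w. restrict (Rs w) (C - S))"
    and "Qall \<equiv> (\<lambda>k S w. map (\<lambda>n. Q k S n w) [1..<N+1])"
    and "Aall \<equiv> (\<lambda>k S w. map (\<lambda>n. A k S n w) [1..<N+1])"
    and "Adm \<equiv> {S. S \<subseteq> C \<and> card S = m}"
    and "D \<equiv> Max {(\<Sum>n\<in>{1..N}. length (A k S n w)) | k S w.
                    k \<in> {1..K} \<and> S \<subseteq> C \<and> card S = m \<and> w \<in> set_pmf P}"
  assumes N: "N \<ge> 1" and K: "K \<ge> 2" and L: "L \<ge> 1"
    and C_fin: "finite C" and m: "m \<le> card C"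
    \<comment> \<open>messages: K x L symbols, i.i.d. uniform over the field\<close>
    and W_unif: "map_pmf Wall P =
        pmf_of_set {xs. length xs = K \<and> (\<forall>x\<in>set xs. length x = L)}"
    \<comment> \<open>the number of symbols returned by database n is fixed by its query\<close>
    and A_len: "\<And>k S n. \<exists>g. \<forall>w\<in>set_pmf P. length (A k S n w) = g (Q k S n w)"
    and C1: "\<And>k S. k \<in> {1..K} \<Longrightarrow> S \<in> Adm \<Longrightarrow>
        mut_inf q P Wall (\<lambda>w. (k, F w, RS w, RU S w)) = 0"
    and C2: "\<And>k S. k \<in> {1..K} \<Longrightarrow> S \<in> Adm \<Longrightarrow>
        mut_inf q P (Qall k S) (\<lambda>w. (Wall w, RSmU S w)) = 0"
    and C3: "\<And>k S. k \<in> {1..K} \<Longrightarrow> S \<in> Adm \<Longrightarrow>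
        cond_ent q P (Qall k S) F = 0"
    and C4: "\<And>k S n. k \<in> {1..K} \<Longrightarrow> S \<in> Adm \<Longrightarrow> n \<in> {1..N} \<Longrightarrow>
        cond_ent q P (A k S n) (\<lambda>w. (Q k S n w, Wall w, RS w)) = 0"
    and C5: "\<And>k S. k \<in> {1..K} \<Longrightarrow> S \<in> Adm \<Longrightarrow>
        cond_ent q P (W k) (\<lambda>w. (F w, Aall k S w, RU S w)) = 0"
    and C6: "\<And>k k' S n. k \<in> {1..K} \<Longrightarrow> k' \<in> {1..K} \<Longrightarrow> S \<in> Adm \<Longrightarrow> n \<in> {1..N} \<Longrightarrow>
        \<exists>S'\<in>Adm. ent q P (RU S') = ent q P (RU S) \<and>
          map_pmf (\<lambda>w. (Q k S n w, A k S n w, Wall w, RS w)) P =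
          map_pmf (\<lambda>w. (Q k' S' n w, A k' S' n w, Wall w, RS w)) P"
    and C7: "\<And>k S. k \<in> {1..K} \<Longrightarrow> S \<in> Adm \<Longrightarrow>
        mut_inf q P (Wbar k) (\<lambda>w. (F w, Aall k S w, RU S w)) = 0"
    and C8: "\<And>k S. k \<in> {1..K} \<Longrightarrow> S \<in> Adm \<Longrightarrow>
        mut_inf q P (RSmU S) (\<lambda>w. (F w, Aall k S w, W k w, RU S w)) = 0"
  shows "real D / real L \<ge> (\<Sum>i<K. 1 / real N ^ i)"
proof -
  have q: "1 < q"
    unfolding q_def by (rule one_less_card_field)
  note Wall_unif = ent_uniform_lists_of_lists[OF W_unif]
  obtain S0 where S0: "S0 \<in> Adm"
    using obtain_subset_with_card_n[OF m] unfolding Adm_def by blast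
  have RU_RS: "determines P RS (RU S)" if "S \<in> Adm" for S
    using that unfolding Adm_def RU_def RS_def by (auto intro: determines_restrict)
  have D: "(\<Sum>n\<in>{1..N}. length (A k S n w)) \<le> D" if "k \<in> {1..K}" "S \<in> Adm" "w \<in> set_pmf P" for k S w
  proof -
    let ?Ds = "{(\<Sum>n\<in>{1..N}. length (A k S n w)) | k S w. k \<in> {1..K} \<and> S \<subseteq> C \<and> card S = m \<and> w \<in> set_pmf P}"
    have "?Ds \<subseteq> (\<lambda>(k, S, w). \<Sum>n\<in>{1..N}. length (A k S n w)) ` ({1..K} \<times> Pow C \<times> UNIV)"
      by (auto simp: image_iff) (metis Pow_iff atLeastAtMost_iff)
    then have "finite ?Ds"
      by (rule finite_subset) (use C_fin in simp)
    moreover have "(\<Sum>n\<in>{1..N}. length (A k S n w)) \<in> ?Ds"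
      using that unfolding Adm_def by blast
    ultimately show ?thesis
      unfolding D_def by (rule Max_ge)
  qed
  interpret spir_scheme P q N K L D W F RS Adm RU Q A
  proof
    show "finite Adm"
      using C_fin unfolding Adm_def by (auto intro: finite_subset[of _ "Pow C"])
    show "ent q P (W i) \<le> L" if i: "i \<in> {1..K}" for i
    proof -
      have "length (W i w) = L" if "w \<in> set_pmf P" for w
        using Wall_unif(2)[OF that] i by (auto simp: Wall_def simp del: upt_Suc)
      then show ?thesis
        using ent_list_le[OF q, of P "W i" L] q by (simp add: q_def)
    qed
    show "ent q P (\<lambda>w. map (\<lambda>i. W i w) [1..<K+1]) = K * L"
      using Wall_unif(1)[of q] q unfolding Wall_def q_def by simp
    have "mut_inf q P Wall (\<lambda>w. (1::nat, F w, RS w, RU S0 w)) = mut_inf q P Wall (\<lambda>w. (F w, RS w))"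
    proof (intro mut_inf_eq_if_determines[OF q] determinesI)
      fix w v assume "w \<in> set_pmf P" "v \<in> set_pmf P" "(F w, RS w) = (F v, RS v)"
      then show "(1::nat, F w, RS w, RU S0 w) = (1, F v, RS v, RU S0 v)"
        using determinesD[OF RU_RS[OF S0], of w v] by simp
    qed simp
    then show "mut_inf q P (\<lambda>w. map (\<lambda>i. W i w) [1..<K+1]) (\<lambda>w. (F w, RS w)) = 0"
      using C1[OF _ S0] K unfolding Wall_def by simp
    show "cond_ent q P (\<lambda>w. map (\<lambda>n. Q k S n w) [1..<N+1]) F = 0" if "k \<in> {1..K}" "S \<in> Adm" for k S
      using C3[OF that] unfolding Qall_def .
    show "cond_ent q P (A k S n) (\<lambda>w. (Q k S n w, map (\<lambda>i. W i w) [1..<K+1], RS w)) = 0"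
      if "k \<in> {1..K}" "S \<in> Adm" "n \<in> {1..N}" for k S n
      using C4[OF that] unfolding Wall_def .
    show "cond_ent q P (W k) (\<lambda>w. (F w, map (\<lambda>n. A k S n w) [1..<N+1], RU S w)) = 0"
      if "k \<in> {1..K}" "S \<in> Adm" for k S
      using C5[OF that] unfolding Aall_def .
    show "\<exists>S'\<in>Adm. map_pmf (\<lambda>w. (Q k S n w, A k S n w, map (\<lambda>i. W i w) [1..<K+1], RS w)) P =
                 map_pmf (\<lambda>w. (Q k' S' n w, A k' S' n w, map (\<lambda>i. W i w) [1..<K+1], RS w)) P"
      if "k \<in> {1..K}" "k' \<in> {1..K}" "S \<in> Adm" "n \<in> {1..N}" for k k' S n
      using C6[OF that] unfolding Wall_def by blast
  qed (use q N K S0 RU_RS A_len D in auto)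
  have "L * (\<Sum>i<K. 1 / real N ^ i) \<le> D"
    using download_lower_bound q by (simp add: q_def)
  with L show ?thesis
    by (simp add: pos_le_divide_eq mult.commute)
qed

end
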